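(* For every distribution over $\mathscr X\times\mathscr Y$ and every $h\in\mathscr H_{\rm all}$, $$\mathscr R_{\mathsf L_{\rm ham}}(h)-\mathscr R^*_{\mathsf L_{\rm ham}}(\mathscr H_{\rm all})\le 2\big(\mathscr R_{\widetilde{\mathsf L}_{\log}}(h)-\mathscr R^*_{\widetilde{\mathsf L}_{\log}}(\mathscr H_{\rm all})\big)^{1/2}.$$ Moreover, $\widetilde{\mathsf L}_{\log}$ is Bayes-consistent with respect to $\mathsf L_{\rm ham}$.
   Context: Let $\mathscr X$ be an input space, $l\ge1$, $[l]=\{1,\dots,l\}$, $\mathscr Y=\{+1,-1\}^l$, and $\mathscr H_{\rm all}$ the family of all measurable $h\colon\mathscr X\times[l]\to\mathbb R$. Let $\operatorname{sign}(t)=1$ if $t\ge0$, $-1$ otherwise, and $\mathsf h(x)=(\operatorname{sign}h(x,1),\dots,\operatorname{sign}h(x,l))$. Normalized Hamming loss: $\overline{\mathsf L}_{\rm ham}(y',y)=\frac1l\sum_{i=1}^l1_{y_i\ne y'_i}$, $\mathsf L_{\rm ham}(h,x,y)=\overline{\mathsf L}_{\rm ham}(\mathsf h(x),y)$. Multi-label logistic loss: $\widetilde{\mathsf L}_{\log}(h,x,y)=\sum_{y'\in\mathscr Y}(1-\overline{\mathsf L}_{\rm ham}(y',y))\log\big(\sum_{y''\in\mathscr Y}e^{\sum_{i=1}^l(y''_i-y'_i)h(x,i)}\big)$. For a loss $\ell$ and distribution $\mathcal D$: $\mathscr R_\ell(h)=\mathbb E_{\mathcal D}[\ell(h,x,y)]$,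 $\mathscr R^*_\ell(\mathscr H)=\inf_{h\in\mathscr H}\mathscr R_\ell(h)$. A surrogate $\widetilde{\mathsf L}$ is Bayes-consistent w.r.t. $\mathsf L$ if for every distribution and every sequence $(h_n)\subset\mathscr H_{\rm all}$, $\mathscr R_{\widetilde{\mathsf L}}(h_n)-\mathscr R^*_{\widetilde{\mathsf L}}(\mathscr H_{\rm all})\to0$ implies $\mathscr R_{\mathsf L}(h_n)-\mathscr R^*_{\mathsf L}(\mathscr H_{\rm all})\to0$. *)

theory Defs
  imports "HOL-Probability.Probability"
begin

definition Ylab :: "nat \<Rightarrow> (nat \<Rightarrow> real) set" where
  "Ylab l = PiE {1..l} (\<lambda>_. {1, -1})"

definition sgn1 :: "real \<Rightarrow> real" where
  "sgn1 t = (if t \<ge> 0 then 1 else -1)"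

text \<open>Hypothesis set: all measurable \<open>h : X \<times> [l] \<rightarrow> \<real>\<close>
  (measurability w.r.t. the product with the discrete index set means each section is measurable).\<close>
definition Hall :: "'x measure \<Rightarrow> nat \<Rightarrow> ('x \<Rightarrow> nat \<Rightarrow> real) set" where
  "Hall M l = {h. \<forall>i\<in>{1..l}. (\<lambda>x. h x i) \<in> borel_measurable M}"

definition pred_lab :: "nat \<Rightarrow> ('x \<Rightarrow> nat \<Rightarrow> real) \<Rightarrow> 'x \<Rightarrow> (nat \<Rightarrow> real)" where
  "pred_lab l h x = (\<lambda>i\<in>{1..l}. sgn1 (h x i))"

definition ham_bar :: "nat \<Rightarrow> (nat \<Rightarrow> real) \<Rightarrow> (nat \<Rightarrow> real) \<Rightarrow> real" where
  "ham_bar l y' y = (1 / real l) * real (card {i\<in>{1..l}. y i \<noteq> y' i})"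

definition L_ham :: "nat \<Rightarrow> ('x \<Rightarrow> nat \<Rightarrow> real) \<Rightarrow> 'x \<Rightarrow> (nat \<Rightarrow> real) \<Rightarrow> real" where
  "L_ham l h x y = ham_bar l (pred_lab l h x) y"

definition L_log :: "nat \<Rightarrow> ('x \<Rightarrow> nat \<Rightarrow> real) \<Rightarrow> 'x \<Rightarrow> (nat \<Rightarrow> real) \<Rightarrow> real" where
  "L_log l h x y = (\<Sum>y'\<in>Ylab l. (1 - ham_bar l y' y) *
       ln (\<Sum>y''\<in>Ylab l. exp (\<Sum>i=1..l. (y'' i - y' i) * h x i)))"

text \<open>Risk (expected loss; both losses are nonnegative, so we use the nonnegative integral,
  which may be \<open>\<infinity>\<close>) and best-in-class risk.\<close>
definition risk :: "('x \<times> (nat \<Rightarrow> real)) measure \<Rightarrow> (('x \<Rightarrow> nat \<Rightarrow> real) \<Rightarrow> 'x \<Rightarrow> (nat \<Rightarrow> real) \<Rightarrow> real)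
                     \<Rightarrow> ('x \<Rightarrow> nat \<Rightarrow> real) \<Rightarrow> ennreal" where
  "risk D L h = (\<integral>\<^sup>+ z. ennreal (L h (fst z) (snd z)) \<partial>D)"

definition best_risk :: "('x \<times> (nat \<Rightarrow> real)) measure \<Rightarrow> (('x \<Rightarrow> nat \<Rightarrow> real) \<Rightarrow> 'x \<Rightarrow> (nat \<Rightarrow> real) \<Rightarrow> real)
                     \<Rightarrow> ('x \<Rightarrow> nat \<Rightarrow> real) set \<Rightarrow> ennreal" where
  "best_risk D L H = (INF h\<in>H. risk D L h)"

definition distr_on :: "'x measure \<Rightarrow> nat \<Rightarrow> ('x \<times> (nat \<Rightarrow> real)) measure \<Rightarrow> bool" where
  "distr_on M l D \<longleftrightarrow> prob_space D \<and> sets D = sets (M \<Otimes>\<^sub>M count_space (Ylab l))"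

definition bayes_consistent ::
  "'x measure \<Rightarrow> nat \<Rightarrow> (('x \<Rightarrow> nat \<Rightarrow> real) \<Rightarrow> 'x \<Rightarrow> (nat \<Rightarrow> real) \<Rightarrow> real)
     \<Rightarrow> (('x \<Rightarrow> nat \<Rightarrow> real) \<Rightarrow> 'x \<Rightarrow> (nat \<Rightarrow> real) \<Rightarrow> real) \<Rightarrow> bool" where
  "bayes_consistent M l Ls L \<longleftrightarrow>
     (\<forall>D hs. distr_on M l D \<longrightarrow> (\<forall>n. hs n \<in> Hall M l) \<longrightarrow>
        ((\<lambda>n. risk D Ls (hs n) - best_risk D Ls (Hall M l)) \<longlonglongrightarrow> 0) \<longrightarrow>
        ((\<lambda>n. risk D L (hs n) - best_risk D L (Hall M l)) \<longlonglongrightarrow> 0))"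

definition ennsqrt :: "ennreal \<Rightarrow> ennreal" where
  "ennsqrt x = (if x = \<infinity> then \<infinity> else ennreal (sqrt (enn2real x)))"

end

theory Submission
  imports Defs
begin

text \<open>Both losses are affine in each label coordinate \<open>y\<^sub>i \<in> {1, -1}\<close>: the Hamming loss is
  \<open>\<Sum>\<^sub>i (1 - sgn1 (h x i) y\<^sub>i) / (2 l)\<close>, and the logistic loss, whose inner sum over labels
  factors into a product, is \<open>2\<^bsup>l-1\<^esup> \<Sum>\<^sub>i (ln (exp (h x i) + exp (- h x i)) - y\<^sub>i h x i / l)\<close>.
  So both conditional risks depend on the distribution only through the conditional means
  \<open>m\<^sub>i x = E[y\<^sub>i | x]\<close> (Radon--Nikodym derivatives with respect to the marginal) and split into
  \<open>l\<close> binary problems. In coordinate \<open>i\<close> a prediction of the wrong sign has excess Hamming risk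
  \<open>\<bar>m\<^sub>i x\<bar> / l\<close> but excess logistic risk at least \<open>(m\<^sub>i x / l)\<^sup>2 / 4\<close>. Cauchy--Schwarz over
  the coordinates and Jensen over \<open>x\<close> give \<open>(excess Hamming risk)\<^sup>2 \<le> 4 (excess logistic risk)\<close>,
  the best logistic risk being approached by measurable near-minimisers of the binary problems.\<close>

section \<open>The binary logistic problem\<close>

definition ln2cosh :: "real \<Rightarrow> real" where
  "ln2cosh t = ln (exp t + exp (- t))"

lemma exp_plus_exp_minus_pos: "0 < exp t + exp (- t :: real)"
  by (simp add: add_pos_pos)

lemma abs_le_ln2cosh: "\<bar>t\<bar> \<le> ln2cosh t"
proof -
  have "exp \<bar>t\<bar> \<le> exp t + exp (- t)"
    by (cases "t \<ge> 0") auto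
  then show ?thesis
    unfolding ln2cosh_def using exp_plus_exp_minus_pos[of t]
    by (metis ln_exp ln_le_cancel_iff exp_gt_zero)
qed

lemma ln2_le_ln2cosh: "ln 2 \<le> ln2cosh t"
proof -
  have "0 \<le> (exp (t/2) - exp (-t/2))^2" by simp
  also have "\<dots> = exp t + exp (-t) - 2"
    by (simp add: power2_eq_square algebra_simps flip: exp_add)
  finally show ?thesis
    unfolding ln2cosh_def by (subst ln_le_cancel_iff) (auto simp: add_pos_pos)
qed

lemma ln2cosh_le_ln2_plus_square:
  assumes "\<bar>t\<bar> \<le> 1"
  shows "ln2cosh t \<le> ln 2 + t^2"
proof -
  have "exp \<bar>t\<bar> \<le> 1 + \<bar>t\<bar> + \<bar>t\<bar>^2"
    using assms by (intro exp_bound) auto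
  moreover have "exp (-\<bar>t\<bar>) \<le> 1 - \<bar>t\<bar> + \<bar>t\<bar>^2"
  proof -
    have "(1 + \<bar>t\<bar>) * (1 - \<bar>t\<bar> + \<bar>t\<bar>^2) = 1 + \<bar>t\<bar>^3"
      by (simp add: algebra_simps power2_eq_square power3_eq_cube)
    then have "1 \<le> (1 + \<bar>t\<bar>) * (1 - \<bar>t\<bar> + \<bar>t\<bar>^2)"
      by simp
    also have "\<dots> \<le> exp \<bar>t\<bar> * (1 - \<bar>t\<bar> + \<bar>t\<bar>^2)"
      using assms by (intro mult_right_mono exp_ge_add_one_self) auto
    finally show ?thesis by (simp add: exp_minus field_simps)
  qed
  ultimately have "exp t + exp (-t) \<le> 2 * (1 + t^2)"
    by (cases "t \<ge> 0") auto
  then have "ln2cosh t \<le> ln (2 * (1 + t^2))"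
    unfolding ln2cosh_def by (simp add: exp_plus_exp_minus_pos add_pos_nonneg)
  also have "\<dots> = ln 2 + ln (1 + t^2)"
    by (intro ln_mult_pos) (simp_all add: add_pos_nonneg)
  also have "ln (1 + t^2) \<le> t^2"
    by (rule ln_add_one_self_le_self) simp
  finally show ?thesis by simp
qed

lemma borel_measurable_ln2cosh [measurable]: "ln2cosh \<in> borel_measurable borel"
  unfolding ln2cosh_def by measurable

definition binary_cross_entropy :: "real \<Rightarrow> real \<Rightarrow> real" where
  "binary_cross_entropy p s = - p * ln s - (1 - p) * ln (1 - s)"

lemma binary_cross_entropy_le:
  assumes p: "0 \<le> p" "p \<le> 1" and s: "0 < s" "s < 1" and s': "0 < s'" "s' < 1"
    and "p \<le> (1 + e) * s'" and "1 - p \<le> (1 + e) * (1 - s')"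
  shows "binary_cross_entropy p s' \<le> binary_cross_entropy p s + e"
proof -
  have "p * ln (s / s') \<le> p * (s / s' - 1)"
    using p s s' by (intro mult_left_mono ln_le_minus_one) auto
  moreover have "(1 - p) * ln ((1 - s) / (1 - s')) \<le> (1 - p) * ((1 - s) / (1 - s') - 1)"
    using p s s' by (intro mult_left_mono ln_le_minus_one) auto
  moreover have "p * (s / s') \<le> (1 + e) * s"
  proof -
    have "p / s' \<le> 1 + e" using assms by (simp add: pos_divide_le_eq)
    then show ?thesis
      using s by (metis mult_right_mono times_divide_eq_left times_divide_eq_right less_imp_le)
  qed
  moreover have "(1 - p) * ((1 - s) / (1 - s')) \<le> (1 + e) * (1 - s)"
  proof -
    have "(1 - p) / (1 - s') \<le> 1 + e" using assms by (simp add: pos_divide_le_eq)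
    then show ?thesis
      using s by (metis mult_right_mono times_divide_eq_left times_divide_eq_right diff_ge_0_iff_ge
          less_imp_le)
  qed
  ultimately show ?thesis
    using s s' by (simp add: binary_cross_entropy_def ln_div algebra_simps)
qed

text \<open>The conditional risk of the binary logistic loss \<open>ln (1 + exp (-2 y t))\<close> when the label
  \<open>y \<in> {1, -1}\<close> has mean \<open>c\<close>.\<close>
definition logistic_cond_risk :: "real \<Rightarrow> real \<Rightarrow> real" where
  "logistic_cond_risk c t = ln2cosh t - c * t"

lemma logistic_cond_risk_eq_binary_cross_entropy:
  "logistic_cond_risk c t = binary_cross_entropy ((1 + c) / 2) (1 / (1 + exp (- 2 * t)))"
proof -
  have pos: "0 < 1 + exp x" for x :: real
    by (simp add: add_pos_pos)
  have "exp t + exp (- t) = exp t * (1 + exp (- 2 * t))"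
    by (simp add: distrib_left flip: exp_add)
  then have "ln2cosh t = t + ln (1 + exp (- 2 * t))"
    unfolding ln2cosh_def using ln_mult_pos[OF exp_gt_zero pos, of t "- 2 * t"] by simp
  then have s: "ln (1 / (1 + exp (- 2 * t))) = t - ln2cosh t"
    using pos by (simp add: ln_div)
  have "exp t + exp (- t) = exp (- t) * (1 + exp (2 * t))"
    by (simp add: distrib_left flip: exp_add)
  then have "ln2cosh t = - t + ln (1 + exp (2 * t))"
    unfolding ln2cosh_def using ln_mult_pos[OF exp_gt_zero pos, of "- t" "2 * t"] by simp
  moreover have "1 - 1 / (1 + exp (- 2 * t)) = 1 / (1 + exp (2 * t))"
    using pos[of "2 * t"] by (simp add: exp_minus field_simps)
  ultimately have one_minus_s: "ln (1 - 1 / (1 + exp (- 2 * t))) = - t - ln2cosh t"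
    using pos by (simp add: ln_div)
  show ?thesis
    unfolding logistic_cond_risk_def binary_cross_entropy_def s one_minus_s
    by (simp add: field_simps)
qed

text \<open>Since \<open>tanh\<close> of this point is \<open>c / (1 + e)\<close>, it stays finite for \<open>\<bar>c\<bar> = 1\<close>, where
  \<open>logistic_cond_risk c\<close> has no minimiser.\<close>
definition logistic_near_argmin :: "real \<Rightarrow> real \<Rightarrow> real" where
  "logistic_near_argmin e c = (ln (1 + c + e) - ln (1 - c + e)) / 2"

lemma logistic_cond_risk_near_argmin:
  assumes c: "\<bar>c\<bar> \<le> 1" and e: "0 < e"
  shows "logistic_cond_risk c (logistic_near_argmin e c) \<le> logistic_cond_risk c t + e"
proof -
  define u v where "u = 1 + c + e" and "v = 1 - c + e"
  have uv: "0 < u" "0 < v"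
    using c e by (auto simp: u_def v_def)
  have "- 2 * logistic_near_argmin e c = ln v - ln u"
    by (simp add: logistic_near_argmin_def u_def v_def)
  then have exp_argmin: "exp (- 2 * logistic_near_argmin e c) = v / u"
    using uv by (simp only: exp_diff exp_ln)
  have argmin: "1 / (1 + exp (- 2 * logistic_near_argmin e c)) = u / (u + v)"
    unfolding exp_argmin using uv by (simp add: field_simps)
  have sigmoid: "0 < 1 / (1 + exp (- 2 * t))" "1 / (1 + exp (- 2 * t)) < 1"
    by (simp_all add: add_pos_pos)
  show ?thesis
    unfolding logistic_cond_risk_eq_binary_cross_entropy argmin
    using c e uv sigmoid
    by (intro binary_cross_entropy_le) (auto simp: u_def v_def field_simps)
qed

lemma logistic_cond_risk_nonneg:
  assumes "\<bar>c\<bar> \<le> 1"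
  shows "0 \<le> logistic_cond_risk c t"
proof -
  have "c * t \<le> \<bar>c\<bar> * \<bar>t\<bar>"
    by (simp add: abs_mult [symmetric])
  also have "\<dots> \<le> \<bar>t\<bar>"
    using assms by (simp add: mult_left_le_one_le)
  finally show ?thesis
    using abs_le_ln2cosh[of t] by (simp add: logistic_cond_risk_def)
qed

lemma square_le_logistic_cond_excess:
  assumes c: "\<bar>c\<bar> \<le> 1" and e: "0 < e" and wrong_sign: "c * t \<le> 0"
  shows "c^2 \<le> 4 * (logistic_cond_risk c t - logistic_cond_risk c (logistic_near_argmin e c) + e)"
proof -
  have "logistic_cond_risk c (logistic_near_argmin e c) \<le> logistic_cond_risk c (c / 2) + e"
    using c e by (rule logistic_cond_risk_near_argmin)
  also have "\<dots> \<le> ln 2 + (c / 2)^2 - c * (c / 2) + e"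
    using c ln2cosh_le_ln2_plus_square[of "c / 2"] by (simp add: logistic_cond_risk_def)
  also have "\<dots> = ln 2 - c^2 / 4 + e"
    by (simp add: power2_eq_square field_simps)
  also have "ln 2 \<le> logistic_cond_risk c t"
    using ln2_le_ln2cosh[of t] wrong_sign by (simp add: logistic_cond_risk_def)
  finally show ?thesis by simp
qed

text \<open>\<open>(\<bar>m\<bar> - sgn1 t * m) / 2\<close> is the excess conditional 0-1 risk of predicting \<open>sgn1 t\<close>
  for a label of mean \<open>m\<close>.\<close>
lemma square_sign_excess_le_logistic_excess:
  assumes m: "\<bar>m\<bar> \<le> 1" and L: "1 \<le> L" and e: "0 < e"
  defines "c \<equiv> m / L"
  shows "((\<bar>m\<bar> - sgn1 t * m) / (2 * L))^2
    \<le> 4 * (logistic_cond_risk c t - logistic_cond_risk c (logistic_near_argmin e c) + e)"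
proof -
  have c: "\<bar>c\<bar> \<le> 1"
    using m L by (simp add: c_def abs_divide divide_le_eq)
  show ?thesis
  proof (cases "0 \<le> sgn1 t * m")
    case True
    then have "\<bar>m\<bar> - sgn1 t * m = 0"
      by (auto simp: sgn1_def split: if_splits)
    then show ?thesis
      using logistic_cond_risk_near_argmin[OF c e, of t] by simp
  next
    case False
    then have "(\<bar>m\<bar> - sgn1 t * m) / (2 * L) = \<bar>c\<bar>" and "c * t \<le> 0"
      using L by (auto simp: sgn1_def c_def abs_divide field_simps mult_le_0_iff split: if_splits)
    then show ?thesis
      using square_le_logistic_cond_excess[OF c e] by simp
  qed
qed

section \<open>The label cube\<close>

lemma Ylab_coord: "y \<in> Ylab l \<Longrightarrow> i \<in> {1..l} \<Longrightarrow> y i = 1 \<or> y i = -1"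
  unfolding Ylab_def by (auto simp: PiE_iff)

lemma card_Ylab: "card (Ylab l) = 2 ^ l"
  unfolding Ylab_def by (simp add: card_PiE) (simp add: numeral_2_eq_2)

lemma sum_Ylab_prod:
  "(\<Sum>y\<in>Ylab l. \<Prod>k\<in>{1..l}. f k (y k)) = (\<Prod>k\<in>{1..l}. f k 1 + f k (-1) :: real)"
  unfolding Ylab_def by (subst prod_sum_PiE [symmetric]) auto

lemma sum_Ylab_coord:
  assumes "i \<in> {1..l}"
  shows "(\<Sum>y\<in>Ylab l. y i) = 0"
proof -
  have "(\<Sum>y\<in>Ylab l. y i) = (\<Sum>y\<in>Ylab l. \<Prod>k\<in>{1..l}. if k = i then y k else 1)"
    using assms by simp
  also have "\<dots> = (\<Prod>k\<in>{1..l}. (if k = i then 1 else 1) + (if k = i then -1 else 1))"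
    by (rule sum_Ylab_prod)
  also have "\<dots> = 0"
    using assms by (intro prod_zero) auto
  finally show ?thesis .
qed

lemma sum_Ylab_coord_mult:
  assumes "i \<in> {1..l}" "j \<in> {1..l}"
  shows "(\<Sum>y\<in>Ylab l. y i * y j) = (if i = j then 2 ^ l else 0)"
proof (cases "i = j")
  case True
  have "(\<Sum>y\<in>Ylab l. y i * y j) = (\<Sum>y\<in>Ylab l. 1)"
    using True assms Ylab_coord by (intro sum.cong) fastforce+
  then show ?thesis
    using True by (simp add: card_Ylab)
next
  case False
  have "(\<Sum>y\<in>Ylab l. y i * y j) = (\<Sum>y\<in>Ylab l. \<Prod>k\<in>{1..l}. if k = i \<or> k = j then y k else 1)"
  proof (rule sum.cong)
    fix y
    have "(\<Prod>k\<in>{1..l}. if k = i \<or> k = j then y k else 1) = (\<Prod>k\<in>{i, j}. y k)"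
      using assms by (intro prod.mono_neutral_cong_right) auto
    then show "y i * y j = (\<Prod>k\<in>{1..l}. if k = i \<or> k = j then y k else 1)"
      using False by simp
  qed simp
  also have "\<dots> = (\<Prod>k\<in>{1..l}. (if k = i \<or> k = j then 1 else 1) + (if k = i \<or> k = j then -1 else 1))"
    by (rule sum_Ylab_prod)
  also have "\<dots> = 0"
    using assms by (intro prod_zero) auto
  finally show ?thesis
    using False by simp
qed

lemma ham_bar_eq:
  assumes "y \<in> Ylab l" "y' \<in> Ylab l"
  shows "ham_bar l y' y = (\<Sum>i=1..l. 1 - y' i * y i) / (2 * l)"
proof -
  have "real (card {i\<in>{1..l}. y i \<noteq> y' i}) = (\<Sum>i=1..l. if y i \<noteq> y' i then 1 else 0)"
    by (simp add: sum.If_cases Int_def conj_commute)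
  also have "\<dots> = (\<Sum>i=1..l. (1 - y' i * y i) / 2)"
  proof (rule sum.cong)
    fix i assume "i \<in> {1..l}"
    then show "(if y i \<noteq> y' i then 1 else 0) = (1 - y' i * y i) / 2"
      using Ylab_coord[OF assms(1), of i] Ylab_coord[OF assms(2), of i] by auto
  qed simp
  finally show ?thesis
    by (simp add: ham_bar_def sum_divide_distrib)
qed

lemma ln_sum_exp_Ylab:
  "ln (\<Sum>y''\<in>Ylab l. exp (\<Sum>i=1..l. (y'' i - y' i) * H i))
     = (\<Sum>i=1..l. ln2cosh (H i) - y' i * H i)"
proof -
  have "(\<Sum>y''\<in>Ylab l. exp (\<Sum>i=1..l. (y'' i - y' i) * H i))
      = (\<Prod>k\<in>{1..l}. exp ((1 - y' k) * H k) + exp ((-1 - y' k) * H k))"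
    using sum_Ylab_prod[where f = "\<lambda>k s. exp ((s - y' k) * H k)"] by (simp add: exp_sum)
  also have "\<dots> = (\<Prod>k\<in>{1..l}. exp (- y' k * H k) * (exp (H k) + exp (- H k)))"
    by (intro prod.cong refl) (simp add: algebra_simps flip: exp_add)
  finally show ?thesis
    using exp_plus_exp_minus_pos[THEN less_imp_not_eq2] by (simp add: ln_prod ln_mult ln2cosh_def)
qed

lemma L_log_eq:
  assumes l: "l \<ge> 1" and y: "y \<in> Ylab l"
  shows "L_log l h x y = 2 ^ (l - 1) * (\<Sum>i=1..l. ln2cosh (h x i) - y i * h x i / l)"
proof -
  define H A where "H = h x" and "A = (\<Sum>i=1..l. ln2cosh (H i))"
  have "L_log l h x y
      = (\<Sum>y'\<in>Ylab l. (l + (\<Sum>j=1..l. y j * y' j)) * (A - (\<Sum>i=1..l. H i * y' i))) / (2 * l)"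
    unfolding L_log_def ln_sum_exp_Ylab sum_divide_distrib
  proof (intro sum.cong refl)
    fix y' assume "y' \<in> Ylab l"
    then have "1 - ham_bar l y' y = (l + (\<Sum>j=1..l. y j * y' j)) / (2 * l)"
      using l y by (simp add: ham_bar_eq sum_subtractf field_simps mult.commute)
    then show "(1 - ham_bar l y' y) * (\<Sum>i=1..l. ln2cosh (h x i) - y' i * h x i)
        = (l + (\<Sum>j=1..l. y j * y' j)) * (A - (\<Sum>i=1..l. H i * y' i)) / (2 * l)"
      by (simp add: A_def H_def sum_subtractf mult.commute)
  qed
  \<comment> \<open>Only the moments of order at most two of the uniform distribution on the cube remain.\<close>
  also have "\<dots> = (l * A * 2 ^ l - (\<Sum>j=1..l. y j * H j) * 2 ^ l) / (2 * l)"
  proof -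
    have "(\<Sum>y'\<in>Ylab l. (l + (\<Sum>j=1..l. y j * y' j)) * (A - (\<Sum>i=1..l. H i * y' i)))
        = l * A * card (Ylab l) - l * (\<Sum>i=1..l. H i * (\<Sum>y'\<in>Ylab l. y' i))
          + A * (\<Sum>j=1..l. y j * (\<Sum>y'\<in>Ylab l. y' j))
          - (\<Sum>j=1..l. \<Sum>i=1..l. y j * H i * (\<Sum>y'\<in>Ylab l. y' j * y' i))"
      by (simp add: algebra_simps sum.distrib sum_subtractf sum_distrib_left sum_distrib_right
          sum.swap [of _ "Ylab l"])
    also have "\<dots> = l * A * 2 ^ l - (\<Sum>j=1..l. y j * H j) * 2 ^ l"
      by (simp add: card_Ylab sum_Ylab_coord sum_Ylab_coord_mult if_distrib sum_distrib_right
          cong: if_cong)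
    finally show ?thesis by simp
  qed
  also have "\<dots> = 2 ^ (l - 1) * (A - (\<Sum>j=1..l. y j * H j) / l)"
    using l by (simp add: field_simps power_eq_if)
  finally show ?thesis
    by (simp add: A_def H_def sum_subtractf sum_divide_distrib)
qed

lemma pred_lab_in_Ylab: "pred_lab l h x \<in> Ylab l"
  by (auto simp: pred_lab_def Ylab_def sgn1_def)

lemma L_ham_eq:
  assumes "y \<in> Ylab l"
  shows "L_ham l h x y = (\<Sum>i=1..l. 1 - sgn1 (h x i) * y i) / (2 * l)"
  unfolding L_ham_def ham_bar_eq[OF assms pred_lab_in_Ylab] by (simp add: pred_lab_def)

section \<open>Conditional probabilities given the first component\<close>

locale joint_prob_space = prob_space D for D :: "('a \<times> 'b) measure" +
  fixes M :: "'a measure"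
  assumes measurable_fst_joint [measurable]: "fst \<in> measurable D M"
begin

definition marginal :: "'a measure" where
  "marginal = distr D M fst"

text \<open>\<open>P(A | x)\<close> as the Radon--Nikodym derivative of \<open>B \<mapsto> P(A \<inter> fst -` B)\<close> with respect to the
  marginal; it lies in \<open>[0, 1]\<close> only almost everywhere, hence the truncation in \<open>cond_prob\<close>.\<close>
definition cond_prob_density :: "('a \<times> 'b) set \<Rightarrow> 'a \<Rightarrow> ennreal" where
  "cond_prob_density A = RN_deriv marginal (distr (density D (indicator A)) M fst)"

definition cond_prob :: "('a \<times> 'b) set \<Rightarrow> 'a \<Rightarrow> real" where
  "cond_prob A x = min 1 (enn2real (cond_prob_density A x))"

lemma sets_marginal [simp, measurable_cong]: "sets marginal = sets M"
  by (simp add: marginal_def)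

lemma space_marginal [simp]: "space marginal = space M"
  by (simp add: marginal_def)

lemma prob_space_marginal: "prob_space marginal"
  unfolding marginal_def by (rule prob_space_distr) measurable

lemma emeasure_marginal_space [simp]: "emeasure marginal (space M) = 1"
  using prob_space.emeasure_space_1[OF prob_space_marginal] by simp

lemma borel_measurable_cond_prob_density [measurable]: "cond_prob_density A \<in> borel_measurable M"
  unfolding cond_prob_density_def
  using measurable_cong_sets[OF sets_marginal refl] borel_measurable_RN_deriv by blast

lemma borel_measurable_cond_prob [measurable]: "cond_prob A \<in> borel_measurable M"
  unfolding cond_prob_def[abs_def] by measurable

lemma cond_prob_nonneg: "0 \<le> cond_prob A x"
  and cond_prob_le_1: "cond_prob A x \<le> 1"
  by (auto simp: cond_prob_def)

lemma absolutely_continuous_restrict_fst: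
  assumes A: "A \<in> sets D"
  shows "absolutely_continuous marginal (distr (density D (indicator A)) M fst)"
  unfolding absolutely_continuous_def
proof
  fix N assume N: "N \<in> null_sets marginal"
  then have null: "fst -` N \<inter> space D \<in> null_sets D"
    unfolding marginal_def by (simp add: null_sets_distr_iff)
  have "AE z in D. z \<notin> fst -` N \<inter> space D"
    using null by (rule AE_not_in)
  then have "AE z in D. z \<in> fst -` N \<inter> space D \<longrightarrow> indicator A z = (0::ennreal)"
    by eventually_elim auto
  then have "fst -` N \<inter> space D \<in> null_sets (density D (indicator A))"
    using A null by (subst null_sets_density_iff) auto
  then show "N \<in> null_sets (distr (density D (indicator A)) M fst)"
    using N by (subst null_sets_distr_iff) auto
qed

lemma nn_integral_fst_mult_indicator:
  assumes A: "A \<in> sets D" and f [measurable]: "f \<in> borel_measurable M"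
  shows "(\<integral>\<^sup>+ z. f (fst z) * indicator A z \<partial>D) = (\<integral>\<^sup>+ x. cond_prob_density A x * f x \<partial>marginal)"
proof -
  have "(\<integral>\<^sup>+ x. cond_prob_density A x * f x \<partial>marginal)
      = (\<integral>\<^sup>+ x. f x \<partial>distr (density D (indicator A)) M fst)"
    unfolding cond_prob_density_def
    by (rule sigma_finite_measure.RN_deriv_nn_integral
        [OF prob_space_imp_sigma_finite[OF prob_space_marginal] absolutely_continuous_restrict_fst[OF A],
         symmetric])
       (auto simp: marginal_def)
  also have "\<dots> = (\<integral>\<^sup>+ z. indicator A z * f (fst z) \<partial>D)"
    using A by (simp add: nn_integral_distr nn_integral_density)
  finally show ?thesis
    by (simp add: mult.commute)
qed

lemma AE_cond_prob_density_add_compl: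
  assumes A: "A \<in> sets D"
  shows "AE x in marginal. cond_prob_density A x + cond_prob_density (space D - A) x = 1"
proof -
  let ?p = "\<lambda>x. cond_prob_density A x + cond_prob_density (space D - A) x"
  have "density marginal ?p = density marginal (\<lambda>_. 1)"
  proof (rule measure_eqI)
    fix X assume "X \<in> sets (density marginal ?p)"
    then have X [measurable]: "X \<in> sets M" by simp
    have "emeasure (density marginal ?p) X
        = (\<integral>\<^sup>+ x. cond_prob_density A x * indicator X x \<partial>marginal)
          + (\<integral>\<^sup>+ x. cond_prob_density (space D - A) x * indicator X x \<partial>marginal)"
      by (simp add: emeasure_density distrib_right nn_integral_add)
    also have "\<dots> = (\<integral>\<^sup>+ z. indicator X (fst z) * indicator A z \<partial>D)
          + (\<integral>\<^sup>+ z. indicator X (fst z) * indicator (space D - A) z \<partial>D)"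
      using A by (simp add: nn_integral_fst_mult_indicator)
    also have "\<dots> = (\<integral>\<^sup>+ z. indicator X (fst z) \<partial>D)"
      using A by (subst nn_integral_add [symmetric]) (auto intro!: nn_integral_cong simp: indicator_def)
    also have "\<dots> = emeasure (density marginal (\<lambda>_. 1)) X"
      using nn_integral_distr[of fst D M "indicator X"] by (simp add: emeasure_density marginal_def)
    finally show "emeasure (density marginal ?p) X = emeasure (density marginal (\<lambda>_. 1)) X" .
  qed simp
  then show ?thesis
    using sigma_finite_measure.density_unique_iff
      [OF prob_space_imp_sigma_finite[OF prob_space_marginal], of ?p "\<lambda>_. 1"]
    by simp
qed

lemma AE_cond_prob_density_eq:
  assumes "A \<in> sets D"
  shows "AE x in marginal. cond_prob_density A x = ennreal (cond_prob A x)
    \<and> cond_prob_density (space D - A) x = ennreal (1 - cond_prob A x)"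
  using AE_cond_prob_density_add_compl[OF assms]
proof eventually_elim
  fix x assume sum: "cond_prob_density A x + cond_prob_density (space D - A) x = 1"
  then have "cond_prob_density A x \<noteq> \<top>" "cond_prob_density (space D - A) x \<noteq> \<top>"
    by (auto simp: top_add add_top)
  then obtain a b where ab: "cond_prob_density A x = ennreal a" "0 \<le> a"
    "cond_prob_density (space D - A) x = ennreal b" "0 \<le> b"
    by (metis enn2real_nonneg ennreal_enn2real less_top)
  with sum have "a + b = 1"
    by (metis ennreal_1 ennreal_inj ennreal_plus add_nonneg_nonneg zero_le_one)
  with ab show "cond_prob_density A x = ennreal (cond_prob A x)
    \<and> cond_prob_density (space D - A) x = ennreal (1 - cond_prob A x)"
    by (auto simp: cond_prob_def min_def)
qed

lemma nn_integral_if_cond_prob: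
  assumes A: "A \<in> sets D"
    and [measurable]: "a \<in> borel_measurable M" "b \<in> borel_measurable M"
    and nonneg: "\<And>x. 0 \<le> a x" "\<And>x. 0 \<le> b x"
  shows "(\<integral>\<^sup>+ z. ennreal (if z \<in> A then a (fst z) else b (fst z)) \<partial>D)
    = (\<integral>\<^sup>+ x. ennreal (cond_prob A x * a x + (1 - cond_prob A x) * b x) \<partial>marginal)"
proof -
  have "(\<integral>\<^sup>+ z. ennreal (if z \<in> A then a (fst z) else b (fst z)) \<partial>D)
      = (\<integral>\<^sup>+ z. ennreal (a (fst z)) * indicator A z \<partial>D)
        + (\<integral>\<^sup>+ z. ennreal (b (fst z)) * indicator (space D - A) z \<partial>D)"
    using A by (subst nn_integral_add [symmetric]) (auto intro!: nn_integral_cong simp: indicator_def)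
  also have "\<dots> = (\<integral>\<^sup>+ x. cond_prob_density A x * ennreal (a x)
        + cond_prob_density (space D - A) x * ennreal (b x) \<partial>marginal)"
    using A nn_integral_fst_mult_indicator[of A "\<lambda>x. ennreal (a x)"]
      nn_integral_fst_mult_indicator[of "space D - A" "\<lambda>x. ennreal (b x)"]
    by (simp add: nn_integral_add)
  also have "\<dots> = (\<integral>\<^sup>+ x. ennreal (cond_prob A x * a x + (1 - cond_prob A x) * b x) \<partial>marginal)"
    using AE_cond_prob_density_eq[OF A]
    by (intro nn_integral_cong_AE, eventually_elim)
       (simp add: nonneg cond_prob_nonneg cond_prob_le_1 ennreal_mult ennreal_plus)
  finally show ?thesis .
qed

lemma nn_integral_marginal_bounded:
  assumes "\<And>x. f x \<le> c"
  shows "(\<integral>\<^sup>+ x. ennreal (f x) \<partial>marginal) \<noteq> \<top>"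
proof -
  have "(\<integral>\<^sup>+ x. ennreal (f x) \<partial>marginal) \<le> (\<integral>\<^sup>+ x. ennreal c \<partial>marginal)"
    using assms by (intro nn_integral_mono ennreal_leI)
  then have "(\<integral>\<^sup>+ x. ennreal (f x) \<partial>marginal) \<le> ennreal c"
    by simp
  then show ?thesis
    by (rule neq_top_trans [OF ennreal_neq_top])
qed

lemma square_nn_integral_marginal_le:
  assumes "f \<in> borel_measurable M"
  shows "(\<integral>\<^sup>+ x. f x \<partial>marginal)^2 \<le> (\<integral>\<^sup>+ x. f x ^ 2 \<partial>marginal)"
  using Cauchy_Schwarz_nn_integral[of f marginal "\<lambda>_. 1"] assms
  by (simp add: measurable_cong_sets[OF sets_marginal refl])

end

section \<open>Conditional risks of the multi-label losses\<close>

lemma borel_measurable_sgn1 [measurable]: "sgn1 \<in> borel_measurable borel"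
  unfolding sgn1_def[abs_def] by measurable

lemma measurable_Hall: "g \<in> Hall M l \<Longrightarrow> i \<in> {1..l} \<Longrightarrow> (\<lambda>x. g x i) \<in> borel_measurable M"
  by (simp add: Hall_def)

locale multilabel_distribution =
  fixes M :: "'x measure" and l :: nat and D :: "('x \<times> (nat \<Rightarrow> real)) measure"
  assumes l_ge_1: "1 \<le> l" and distr_on: "distr_on M l D"
begin

lemma sets_D: "sets D = sets (M \<Otimes>\<^sub>M count_space (Ylab l))"
  using distr_on by (simp add: distr_on_def)

lemma space_D: "space D = space M \<times> Ylab l"
  using sets_eq_imp_space_eq[OF sets_D] by (simp add: space_pair_measure)

end

sublocale multilabel_distribution \<subseteq> joint_prob_space D M
proof -
  have "prob_space D"
    using distr_on by (simp add: distr_on_def)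
  moreover have "fst \<in> measurable D M"
    unfolding measurable_cong_sets[OF sets_D refl] by (rule measurable_fst)
  ultimately show "joint_prob_space D M"
    by (simp add: joint_prob_space_def joint_prob_space_axioms_def)
qed

context multilabel_distribution
begin

lemma snd_in_Ylab: "z \<in> space D \<Longrightarrow> snd z \<in> Ylab l"
  by (auto simp: space_D)

lemma measurable_snd_coord [measurable]: "(\<lambda>z. snd z i) \<in> measurable D (count_space UNIV)"
proof -
  have "snd \<in> measurable D (count_space (Ylab l))"
    unfolding measurable_cong_sets[OF sets_D refl] by (rule measurable_snd)
  then show ?thesis
    by (rule measurable_compose) simp
qed

lemma borel_measurable_snd_coord [measurable]: "(\<lambda>z. snd z i) \<in> borel_measurable D"
  using measurable_snd_coord by (rule measurable_compose) simp

lemma label_event: "{z \<in> space D. snd z i = 1} \<in> sets D"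
  using pred_count_space_const1[OF measurable_snd_coord, of 1] by (simp add: pred_def)

definition label_mean :: "nat \<Rightarrow> 'x \<Rightarrow> real" where
  "label_mean i x = 2 * cond_prob {z \<in> space D. snd z i = 1} x - 1"

lemma abs_label_mean_le_1: "\<bar>label_mean i x\<bar> \<le> 1"
  using cond_prob_nonneg cond_prob_le_1 by (simp add: label_mean_def abs_le_iff)

lemma borel_measurable_label_mean [measurable]: "label_mean i \<in> borel_measurable M"
  unfolding label_mean_def[abs_def] by measurable

lemma nn_integral_affine_label:
  assumes i: "i \<in> {1..l}" and a: "a \<in> borel_measurable M" and b: "b \<in> borel_measurable M"
    and dominated: "\<And>x. \<bar>b x\<bar> \<le> a x"
  shows "(\<integral>\<^sup>+ z. ennreal (a (fst z) + b (fst z) * snd z i) \<partial>D)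
    = (\<integral>\<^sup>+ x. ennreal (a x + b x * label_mean i x) \<partial>marginal)"
proof -
  let ?A = "{z \<in> space D. snd z i = 1}"
  have "(\<integral>\<^sup>+ z. ennreal (a (fst z) + b (fst z) * snd z i) \<partial>D)
      = (\<integral>\<^sup>+ z. ennreal (if z \<in> ?A then a (fst z) + b (fst z) else a (fst z) - b (fst z)) \<partial>D)"
    using Ylab_coord[OF snd_in_Ylab i] by (intro nn_integral_cong) fastforce
  also have "\<dots> = (\<integral>\<^sup>+ x. ennreal (cond_prob ?A x * (a x + b x)
      + (1 - cond_prob ?A x) * (a x - b x)) \<partial>marginal)"
  proof (rule nn_integral_if_cond_prob [OF label_event])
    show "(\<lambda>x. a x + b x) \<in> borel_measurable M" "(\<lambda>x. a x - b x) \<in> borel_measurable M"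
      using a b by (simp_all add: borel_measurable_add borel_measurable_diff)
    show "0 \<le> a x + b x" "0 \<le> a x - b x" for x
      using dominated[of x] by (simp_all add: abs_le_iff)
  qed
  also have "\<dots> = (\<integral>\<^sup>+ x. ennreal (a x + b x * label_mean i x) \<partial>marginal)"
    by (simp add: label_mean_def algebra_simps)
  finally show ?thesis .
qed

lemma nn_integral_affine_labels:
  assumes meas: "\<And>i. i \<in> {1..l} \<Longrightarrow> a i \<in> borel_measurable M"
    "\<And>i. i \<in> {1..l} \<Longrightarrow> b i \<in> borel_measurable M"
    and dominated: "\<And>i x. \<bar>b i x\<bar> \<le> a i x"
  shows "(\<integral>\<^sup>+ z. ennreal (\<Sum>i=1..l. a i (fst z) + b i (fst z) * snd z i) \<partial>D)
    = (\<integral>\<^sup>+ x. ennreal (\<Sum>i=1..l. a i x + b i x * label_mean i x) \<partial>marginal)"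
proof -
  have nonneg: "0 \<le> a i x + b i x * t" if "\<bar>t\<bar> \<le> 1" for i x t
  proof -
    have "\<bar>b i x * t\<bar> \<le> \<bar>b i x\<bar>"
      using that by (simp add: abs_mult mult_left_le)
    then show ?thesis
      using dominated[of i x] by linarith
  qed
  have "(\<integral>\<^sup>+ z. ennreal (\<Sum>i=1..l. a i (fst z) + b i (fst z) * snd z i) \<partial>D)
      = (\<integral>\<^sup>+ z. (\<Sum>i=1..l. ennreal (a i (fst z) + b i (fst z) * snd z i)) \<partial>D)"
    using Ylab_coord[OF snd_in_Ylab]
    by (intro nn_integral_cong sum_ennreal [symmetric] nonneg) fastforce
  also have "\<dots> = (\<Sum>i=1..l. \<integral>\<^sup>+ z. ennreal (a i (fst z) + b i (fst z) * snd z i) \<partial>D)"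
  proof (rule nn_integral_sum)
    fix i assume "i \<in> {1..l}"
    note [measurable] = meas[OF this]
    show "(\<lambda>z. ennreal (a i (fst z) + b i (fst z) * snd z i)) \<in> borel_measurable D"
      by measurable
  qed
  also have "\<dots> = (\<Sum>i=1..l. \<integral>\<^sup>+ x. ennreal (a i x + b i x * label_mean i x) \<partial>marginal)"
    using meas dominated by (intro sum.cong refl nn_integral_affine_label)
  also have "\<dots> = (\<integral>\<^sup>+ x. ennreal (\<Sum>i=1..l. a i x + b i x * label_mean i x) \<partial>marginal)"
    using meas abs_label_mean_le_1
    by (subst nn_integral_sum [symmetric]) (auto intro!: nn_integral_cong sum_ennreal nonneg)
  finally show ?thesis .
qed

definition log_cond_risk :: "('x \<Rightarrow> nat \<Rightarrow> real) \<Rightarrow> 'x \<Rightarrow> real" where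
  "log_cond_risk g x = 2 ^ (l - 1) * (\<Sum>i=1..l. logistic_cond_risk (label_mean i x / l) (g x i))"

lemma risk_L_log_eq:
  assumes g: "g \<in> Hall M l"
  shows "risk D (L_log l) g = (\<integral>\<^sup>+ x. ennreal (log_cond_risk g x) \<partial>marginal)"
proof -
  define a b where "a i x = 2 ^ (l - 1) * ln2cosh (g x i)"
    and "b i x = - (2 ^ (l - 1) * (g x i / l))" for i x
  have "\<bar>g x i\<bar> / l \<le> \<bar>g x i\<bar>" for x i
    using l_ge_1 by (simp add: divide_le_eq mult_le_cancel_left1)
  then have "\<bar>g x i\<bar> / l \<le> ln2cosh (g x i)" for x i
    using abs_le_ln2cosh order_trans by blast
  then have dominated: "\<bar>b i x\<bar> \<le> a i x" for i x
    using mult_left_mono[of "\<bar>g x i\<bar> / l" "ln2cosh (g x i)" "2 ^ (l - 1)"]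
    by (simp add: a_def b_def abs_mult)
  have "risk D (L_log l) g
      = (\<integral>\<^sup>+ z. ennreal (\<Sum>i=1..l. a i (fst z) + b i (fst z) * snd z i) \<partial>D)"
    unfolding risk_def using l_ge_1 snd_in_Ylab
    by (intro nn_integral_cong) (simp add: L_log_eq a_def b_def sum_distrib_left algebra_simps)
  also have "\<dots> = (\<integral>\<^sup>+ x. ennreal (\<Sum>i=1..l. a i x + b i x * label_mean i x) \<partial>marginal)"
    using measurable_Hall[OF g] dominated
    by (intro nn_integral_affine_labels) (auto simp: a_def[abs_def] b_def[abs_def])
  finally show ?thesis
    by (simp add: a_def b_def log_cond_risk_def logistic_cond_risk_def sum_distrib_left algebra_simps)
qed

lemma risk_L_ham_eq:
  assumes g: "g \<in> Hall M l"
  shows "risk D (L_ham l) g = (\<integral>\<^sup>+ x. ennreal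
      (\<Sum>i=1..l. (1 - sgn1 (g x i) * label_mean i x) / (2 * l)) \<partial>marginal)"
proof -
  define a b where "a i x = 1 / (2 * l)"
    and "b i x = - sgn1 (g x i) / (2 * l)" for i and x :: 'x
  have dominated: "\<bar>b i x\<bar> \<le> a i x" for i x
    by (simp add: a_def b_def sgn1_def)
  have "risk D (L_ham l) g
      = (\<integral>\<^sup>+ z. ennreal (\<Sum>i=1..l. a i (fst z) + b i (fst z) * snd z i) \<partial>D)"
    unfolding risk_def using snd_in_Ylab
    by (intro nn_integral_cong) (simp add: L_ham_eq a_def b_def sum_divide_distrib diff_divide_distrib)
  also have "\<dots> = (\<integral>\<^sup>+ x. ennreal (\<Sum>i=1..l. a i x + b i x * label_mean i x) \<partial>marginal)"
    using measurable_Hall[OF g] dominated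
    by (intro nn_integral_affine_labels) (auto simp: a_def[abs_def] b_def[abs_def])
  finally show ?thesis
    by (simp add: a_def b_def diff_divide_distrib)
qed

section \<open>Comparison of the excess risks\<close>

definition bayes_ham_cond_risk :: "'x \<Rightarrow> real" where
  "bayes_ham_cond_risk x = (\<Sum>i=1..l. (1 - \<bar>label_mean i x\<bar>) / (2 * l))"

definition ham_cond_excess :: "('x \<Rightarrow> nat \<Rightarrow> real) \<Rightarrow> 'x \<Rightarrow> real" where
  "ham_cond_excess g x = (\<Sum>i=1..l. (\<bar>label_mean i x\<bar> - sgn1 (g x i) * label_mean i x) / (2 * l))"

lemma bayes_ham_cond_risk_nonneg: "0 \<le> bayes_ham_cond_risk x"
  using abs_label_mean_le_1 by (auto simp: bayes_ham_cond_risk_def intro!: sum_nonneg)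

lemma bayes_ham_cond_risk_le_1: "bayes_ham_cond_risk x \<le> 1"
proof -
  have "bayes_ham_cond_risk x \<le> (\<Sum>i=1..l. 1 / l)"
    unfolding bayes_ham_cond_risk_def using l_ge_1
    by (intro sum_mono) (simp add: divide_le_eq)
  then show ?thesis
    using l_ge_1 by simp
qed

lemma ham_cond_excess_nonneg: "0 \<le> ham_cond_excess g x"
  unfolding ham_cond_excess_def
  by (intro sum_nonneg divide_nonneg_pos) (auto simp: sgn1_def)

lemma borel_measurable_ham_cond_excess:
  assumes "g \<in> Hall M l"
  shows "ham_cond_excess g \<in> borel_measurable M"
  unfolding ham_cond_excess_def[abs_def]
proof (rule borel_measurable_sum)
  fix i assume "i \<in> {1..l}"
  note [measurable] = measurable_Hall[OF assms this]
  show "(\<lambda>x. (\<bar>label_mean i x\<bar> - sgn1 (g x i) * label_mean i x) / (2 * l)) \<in> borel_measurable M"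
    by measurable
qed

lemma risk_L_ham_split:
  assumes "g \<in> Hall M l"
  shows "risk D (L_ham l) g
    = (\<integral>\<^sup>+ x. ennreal (bayes_ham_cond_risk x) \<partial>marginal)
      + (\<integral>\<^sup>+ x. ennreal (ham_cond_excess g x) \<partial>marginal)"
proof -
  have "risk D (L_ham l) g
      = (\<integral>\<^sup>+ x. ennreal (bayes_ham_cond_risk x) + ennreal (ham_cond_excess g x) \<partial>marginal)"
  proof (unfold risk_L_ham_eq[OF assms], intro nn_integral_cong)
    fix x
    have "(\<Sum>i=1..l. (1 - sgn1 (g x i) * label_mean i x) / (2 * l))
        = bayes_ham_cond_risk x + ham_cond_excess g x"
      unfolding bayes_ham_cond_risk_def ham_cond_excess_def sum.distrib [symmetric]
      by (intro sum.cong refl) (simp add: add_divide_distrib [symmetric])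
    then show "ennreal (\<Sum>i=1..l. (1 - sgn1 (g x i) * label_mean i x) / (2 * l))
        = ennreal (bayes_ham_cond_risk x) + ennreal (ham_cond_excess g x)"
      by (simp add: bayes_ham_cond_risk_nonneg ham_cond_excess_nonneg ennreal_plus)
  qed
  also have "\<dots> = (\<integral>\<^sup>+ x. ennreal (bayes_ham_cond_risk x) \<partial>marginal)
      + (\<integral>\<^sup>+ x. ennreal (ham_cond_excess g x) \<partial>marginal)"
    using borel_measurable_ham_cond_excess[OF assms]
    by (intro nn_integral_add) (auto simp: bayes_ham_cond_risk_def[abs_def])
  finally show ?thesis .
qed

lemma excess_L_ham_le_integral_ham_cond_excess:
  assumes "h \<in> Hall M l"
  shows "risk D (L_ham l) h - best_risk D (L_ham l) (Hall M l)
    \<le> (\<integral>\<^sup>+ x. ennreal (ham_cond_excess h x) \<partial>marginal)"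
proof -
  let ?B = "\<integral>\<^sup>+ x. ennreal (bayes_ham_cond_risk x) \<partial>marginal"
  have "?B \<le> best_risk D (L_ham l) (Hall M l)"
    unfolding best_risk_def by (intro INF_greatest) (simp add: risk_L_ham_split)
  then have "risk D (L_ham l) h - best_risk D (L_ham l) (Hall M l) \<le> risk D (L_ham l) h - ?B"
    by (rule ennreal_minus_mono [OF order_refl])
  also have "\<dots> = (\<integral>\<^sup>+ x. ennreal (ham_cond_excess h x) \<partial>marginal)"
    using nn_integral_marginal_bounded[OF bayes_ham_cond_risk_le_1]
    by (simp add: risk_L_ham_split[OF assms])
  finally show ?thesis .
qed

lemma log_cond_risk_nonneg: "0 \<le> log_cond_risk g x"
proof -
  have "\<bar>label_mean i x / l\<bar> \<le> 1" for i
    using l_ge_1 abs_label_mean_le_1[of i x] by (simp add: abs_divide divide_le_eq)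
  then have "0 \<le> logistic_cond_risk (label_mean i x / l) (g x i)" for i
    by (rule logistic_cond_risk_nonneg)
  then show ?thesis
    by (simp add: log_cond_risk_def sum_nonneg)
qed

lemma borel_measurable_log_cond_risk:
  assumes "g \<in> Hall M l"
  shows "log_cond_risk g \<in> borel_measurable M"
  unfolding log_cond_risk_def[abs_def]
proof (intro borel_measurable_times borel_measurable_const borel_measurable_sum)
  fix i assume "i \<in> {1..l}"
  note [measurable] = measurable_Hall[OF assms this]
  show "(\<lambda>x. logistic_cond_risk (label_mean i x / l) (g x i)) \<in> borel_measurable M"
    unfolding logistic_cond_risk_def by measurable
qed

definition near_bayes_log :: "real \<Rightarrow> 'x \<Rightarrow> nat \<Rightarrow> real" where
  "near_bayes_log e x i = logistic_near_argmin e (label_mean i x / l)"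

lemma near_bayes_log_in_Hall: "near_bayes_log e \<in> Hall M l"
  unfolding Hall_def near_bayes_log_def logistic_near_argmin_def by measurable

lemma square_ham_cond_excess_le:
  fixes e :: real
  assumes e: "0 < e"
  shows "(ham_cond_excess g x)^2
    \<le> 4 * (log_cond_risk g x - log_cond_risk (near_bayes_log e) x + 2 ^ (l - 1) * real l * e)"
proof -
  define r d where "r i = (\<bar>label_mean i x\<bar> - sgn1 (g x i) * label_mean i x) / (2 * l)"
    and "d i = logistic_cond_risk (label_mean i x / l) (g x i)
      - logistic_cond_risk (label_mean i x / l) (near_bayes_log e x i) + e" for i
  have r_d: "(r i)^2 \<le> 4 * d i" for i
    unfolding r_def d_def near_bayes_log_def
    using square_sign_excess_le_logistic_excess[OF abs_label_mean_le_1 _ e] l_ge_1 by simp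
  \<comment> \<open>Cauchy--Schwarz over the coordinates costs a factor \<open>l \<le> 2 ^ (l - 1)\<close>.\<close>
  have "l \<le> 2 ^ (l - 1)"
    using less_exp[of "l - 1"] l_ge_1 by linarith
  then have l_le: "real l \<le> 2 ^ (l - 1)"
    by (metis of_nat_le_iff of_nat_numeral of_nat_power)
  have "(ham_cond_excess g x)^2 \<le> (\<Sum>i=1..l. (r i)^2) * l"
    using sum_squared_le_sum_of_squares[of r "{1..l}"] by (simp add: ham_cond_excess_def r_def)
  also have "\<dots> \<le> (\<Sum>i=1..l. 4 * d i) * 2 ^ (l - 1)"
  proof (rule mult_mono [OF sum_mono l_le])
    show "0 \<le> (\<Sum>i=1..l. 4 * d i)"
      using r_d by (intro sum_nonneg) (meson order_trans zero_le_power2)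
  qed (use r_d in auto)
  also have "\<dots> = 4 * (2 ^ (l - 1) * (\<Sum>i=1..l. d i))"
    by (simp add: sum_distrib_left sum_distrib_right ac_simps)
  also have "2 ^ (l - 1) * (\<Sum>i=1..l. d i)
      = log_cond_risk g x - log_cond_risk (near_bayes_log e) x + 2 ^ (l - 1) * real l * e"
    by (simp add: d_def log_cond_risk_def sum.distrib sum_subtractf right_diff_distrib distrib_left)
  finally show ?thesis .
qed

lemma square_integral_ham_cond_excess_le:
  assumes h: "h \<in> Hall M l" and K [measurable]: "K \<in> borel_measurable M"
    and bound: "\<And>x. (ham_cond_excess h x)^2 \<le> 4 * K x"
  shows "(\<integral>\<^sup>+ x. ennreal (ham_cond_excess h x) \<partial>marginal)^2
    \<le> 4 * (\<integral>\<^sup>+ x. ennreal (K x) \<partial>marginal)"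
proof -
  have K_nonneg: "0 \<le> K x" for x
    using bound[of x] zero_le_power2[of "ham_cond_excess h x"] by linarith
  have "(\<integral>\<^sup>+ x. ennreal (ham_cond_excess h x) \<partial>marginal)^2
      \<le> (\<integral>\<^sup>+ x. ennreal (ham_cond_excess h x) ^ 2 \<partial>marginal)"
    using borel_measurable_ham_cond_excess[OF h] by (intro square_nn_integral_marginal_le) measurable
  also have "\<dots> \<le> (\<integral>\<^sup>+ x. 4 * ennreal (K x) \<partial>marginal)"
  proof (rule nn_integral_mono)
    fix x
    have "ennreal (ham_cond_excess h x) ^ 2 = ennreal ((ham_cond_excess h x)^2)"
      by (simp add: ennreal_power ham_cond_excess_nonneg)
    also have "\<dots> \<le> ennreal (4 * K x)"
      using bound by (rule ennreal_leI)
    also have "\<dots> = 4 * ennreal (K x)"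
      using K_nonneg by (simp add: ennreal_mult)
    finally show "ennreal (ham_cond_excess h x) ^ 2 \<le> 4 * ennreal (K x)" .
  qed
  also have "\<dots> = 4 * (\<integral>\<^sup>+ x. ennreal (K x) \<partial>marginal)"
    by (simp add: nn_integral_cmult)
  finally show ?thesis .
qed

lemma nn_integral_log_cond_risk_diff:
  assumes h: "h \<in> Hall M l" and g: "g \<in> Hall M l" and C: "0 \<le> C"
    and nonneg: "\<And>x. 0 \<le> log_cond_risk h x - log_cond_risk g x + C"
  shows "(\<integral>\<^sup>+ x. ennreal (log_cond_risk h x - log_cond_risk g x + C) \<partial>marginal) + risk D (L_log l) g
    = risk D (L_log l) h + ennreal C"
proof -
  note [measurable] = borel_measurable_log_cond_risk[OF h] borel_measurable_log_cond_risk[OF g]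
  have "(\<integral>\<^sup>+ x. ennreal (log_cond_risk h x - log_cond_risk g x + C) \<partial>marginal) + risk D (L_log l) g
      = (\<integral>\<^sup>+ x. ennreal (log_cond_risk h x - log_cond_risk g x + C)
          + ennreal (log_cond_risk g x) \<partial>marginal)"
    by (simp add: risk_L_log_eq[OF g] nn_integral_add)
  also have "\<dots> = (\<integral>\<^sup>+ x. ennreal (log_cond_risk h x) + ennreal C \<partial>marginal)"
    using nonneg log_cond_risk_nonneg C by (intro nn_integral_cong) (simp flip: ennreal_plus)
  also have "\<dots> = risk D (L_log l) h + ennreal C"
    by (simp add: risk_L_log_eq[OF h] nn_integral_add)
  finally show ?thesis .
qed

lemma square_ham_excess_le_log_excess_approx:
  fixes e :: real
  assumes h: "h \<in> Hall M l" and e: "0 < e"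
  shows "(\<integral>\<^sup>+ x. ennreal (ham_cond_excess h x) \<partial>marginal)^2 + 4 * best_risk D (L_log l) (Hall M l)
    \<le> 4 * risk D (L_log l) h + ennreal (4 * (2 ^ (l - 1) * real l * e))"
proof -
  define C where "C = 2 ^ (l - 1) * real l * e"
  define K where "K x = log_cond_risk h x - log_cond_risk (near_bayes_log e) x + C" for x
  have bound: "(ham_cond_excess h x)^2 \<le> 4 * K x" for x
    unfolding K_def C_def using e by (rule square_ham_cond_excess_le)
  have K_nonneg: "0 \<le> K x" for x
    using bound[of x] zero_le_power2[of "ham_cond_excess h x"] by linarith
  have C_nonneg: "0 \<le> C"
    using e by (simp add: C_def)
  have "K \<in> borel_measurable M"
    using borel_measurable_log_cond_risk[OF h] borel_measurable_log_cond_risk[OF near_bayes_log_in_Hall]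
    unfolding K_def[abs_def] by measurable
  then have "(\<integral>\<^sup>+ x. ennreal (ham_cond_excess h x) \<partial>marginal)^2
      \<le> 4 * (\<integral>\<^sup>+ x. ennreal (K x) \<partial>marginal)"
    using h bound by (intro square_integral_ham_cond_excess_le)
  moreover have "best_risk D (L_log l) (Hall M l) \<le> risk D (L_log l) (near_bayes_log e)"
    unfolding best_risk_def by (rule INF_lower) (rule near_bayes_log_in_Hall)
  ultimately have "(\<integral>\<^sup>+ x. ennreal (ham_cond_excess h x) \<partial>marginal)^2
      + 4 * best_risk D (L_log l) (Hall M l)
      \<le> 4 * ((\<integral>\<^sup>+ x. ennreal (K x) \<partial>marginal) + risk D (L_log l) (near_bayes_log e))"
    by (simp add: distrib_left add_mono mult_left_mono)
  also have "\<dots> = 4 * (risk D (L_log l) h + ennreal C)"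
    using nn_integral_log_cond_risk_diff[OF h near_bayes_log_in_Hall C_nonneg K_nonneg[unfolded K_def]]
    by (simp add: K_def)
  finally show ?thesis
    using e by (simp add: distrib_left ennreal_mult C_def)
qed

lemma square_ham_excess_le_log_excess:
  assumes h: "h \<in> Hall M l"
  shows "(\<integral>\<^sup>+ x. ennreal (ham_cond_excess h x) \<partial>marginal)^2 + 4 * best_risk D (L_log l) (Hall M l)
    \<le> 4 * risk D (L_log l) h"
proof (rule ennreal_le_epsilon)
  fix e :: real assume "0 < e"
  moreover have "0 < 4 * (2 ^ (l - 1) * real l)"
    using l_ge_1 by simp
  ultimately show "(\<integral>\<^sup>+ x. ennreal (ham_cond_excess h x) \<partial>marginal)^2
      + 4 * best_risk D (L_log l) (Hall M l) \<le> 4 * risk D (L_log l) h + ennreal e"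
    using square_ham_excess_le_log_excess_approx[OF h, of "e / (4 * (2 ^ (l - 1) * real l))"] l_ge_1
    by simp
qed

lemma best_risk_L_log_finite: "best_risk D (L_log l) (Hall M l) \<noteq> \<top>"
proof -
  have zero: "(\<lambda>x i. 0) \<in> Hall M l"
    by (simp add: Hall_def)
  have const: "log_cond_risk (\<lambda>x i. 0) x = 2 ^ (l - 1) * (real l * ln 2)" for x
    by (simp add: log_cond_risk_def logistic_cond_risk_def ln2cosh_def)
  have "risk D (L_log l) (\<lambda>x i. 0) \<noteq> \<top>"
    unfolding risk_L_log_eq[OF zero]
    by (rule nn_integral_marginal_bounded[where c = "2 ^ (l - 1) * (real l * ln 2)"]) (simp add: const)
  moreover have "best_risk D (L_log l) (Hall M l) \<le> risk D (L_log l) (\<lambda>x i. 0)"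
    unfolding best_risk_def using zero by (rule INF_lower)
  ultimately show ?thesis
    by (rule neq_top_trans)
qed

end

lemma le_two_ennsqrt_diff:
  fixes x a b :: ennreal
  assumes le: "x^2 + 4 * b \<le> 4 * a" and b: "b \<noteq> \<top>"
  shows "x \<le> 2 * ennsqrt (a - b)"
proof (cases "a = \<top>")
  case True
  then show ?thesis
    using b by (simp add: ennsqrt_def ennreal_mult_top)
next
  case False
  then obtain ra where a: "a = ennreal ra" "0 \<le> ra"
    by (cases a) auto
  obtain rb where b: "b = ennreal rb" "0 \<le> rb"
    using b by (cases b) auto
  have "4 * a = ennreal (4 * ra)"
    using a by (simp add: ennreal_mult)
  then have "x \<noteq> \<top>"
    using le by (auto simp: top_add power2_eq_square top_unique)
  then obtain rx where x: "x = ennreal rx" "0 \<le> rx"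
    by (cases x) auto
  have "ennreal (rx^2 + 4 * rb) \<le> ennreal (4 * ra)"
    using le a b x by (simp add: ennreal_power ennreal_plus ennreal_mult)
  then have real_le: "rx^2 + 4 * rb \<le> 4 * ra"
    using a by (simp add: ennreal_le_iff)
  then have "rx \<le> sqrt (4 * (ra - rb))"
    using x by (intro real_le_rsqrt) simp
  also have "\<dots> = 2 * sqrt (ra - rb)"
    by (simp only: real_sqrt_mult) simp
  finally have "ennreal rx \<le> ennreal (2 * sqrt (ra - rb))"
    by (rule ennreal_leI)
  moreover have "0 \<le> ra - rb"
    using real_le zero_le_power2[of rx] by linarith
  moreover have "a - b = ennreal (ra - rb)"
    using a b by (simp add: ennreal_minus)
  ultimately show ?thesis
    using x by (simp add: ennsqrt_def ennreal_mult)
qed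

lemma tendsto_two_ennsqrt_zero:
  fixes f :: "'a \<Rightarrow> ennreal"
  assumes "(f \<longlongrightarrow> 0) F"
  shows "((\<lambda>x. 2 * ennsqrt (f x)) \<longlongrightarrow> 0) F"
proof -
  have "eventually (\<lambda>x. f x < 1) F"
    using assms by (rule order_tendstoD) simp
  then have "eventually (\<lambda>x. 2 * ennreal (sqrt (enn2real (f x))) = 2 * ennsqrt (f x)) F"
    by eventually_elim (auto simp: ennsqrt_def)
  moreover have "((\<lambda>x. 2 * ennreal (sqrt (enn2real (f x)))) \<longlongrightarrow> 2 * ennreal (sqrt (enn2real 0))) F"
    using assms by (intro tendsto_intros tendsto_ennrealI tendsto_real_sqrt tendsto_enn2real) auto
  ultimately show ?thesis
    by (simp add: tendsto_cong)
qed

theorem (in multilabel_distribution) excess_L_ham_le_sqrt_excess_L_log: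
  assumes "h \<in> Hall M l"
  shows "risk D (L_ham l) h - best_risk D (L_ham l) (Hall M l)
    \<le> 2 * ennsqrt (risk D (L_log l) h - best_risk D (L_log l) (Hall M l))"
  using excess_L_ham_le_integral_ham_cond_excess[OF assms]
    le_two_ennsqrt_diff[OF square_ham_excess_le_log_excess[OF assms] best_risk_L_log_finite]
  by (rule order_trans)

theorem corollary2:
  fixes M :: "'x measure" and l :: nat
    and D :: "('x \<times> (nat \<Rightarrow> real)) measure" and h :: "'x \<Rightarrow> nat \<Rightarrow> real"
  assumes "l \<ge> 1"
    and "distr_on M l D"
    and "h \<in> Hall M l"
  shows "(risk D (L_ham l) h - best_risk D (L_ham l) (Hall M l)
           \<le> 2 * ennsqrt (risk D (L_log l) h - best_risk D (L_log l) (Hall M l)))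
         \<and> bayes_consistent M l (L_log l) (L_ham l)"
proof
  show "risk D (L_ham l) h - best_risk D (L_ham l) (Hall M l)
      \<le> 2 * ennsqrt (risk D (L_log l) h - best_risk D (L_log l) (Hall M l))"
    using assms by (intro multilabel_distribution.excess_L_ham_le_sqrt_excess_L_log)
      (simp_all add: multilabel_distribution_def)
  show "bayes_consistent M l (L_log l) (L_ham l)"
    unfolding bayes_consistent_def
  proof (intro allI impI)
    fix D' :: "('x \<times> (nat \<Rightarrow> real)) measure" and hs :: "nat \<Rightarrow> 'x \<Rightarrow> nat \<Rightarrow> real"
    assume "distr_on M l D'" and hs: "\<forall>n. hs n \<in> Hall M l"
      and log: "(\<lambda>n. risk D' (L_log l) (hs n) - best_risk D' (L_log l) (Hall M l)) \<longlonglongrightarrow> 0"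
    then interpret multilabel_distribution M l D'
      using assms(1) by unfold_locales
    show "(\<lambda>n. risk D' (L_ham l) (hs n) - best_risk D' (L_ham l) (Hall M l)) \<longlonglongrightarrow> 0"
      using hs excess_L_ham_le_sqrt_excess_L_log
      by (intro tendsto_sandwich [OF _ _ tendsto_const tendsto_two_ennsqrt_zero [OF log]]) auto
  qed
qed

end
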